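(* Let $G$ be a connected simple graph on $n\geq 3$ vertices. Then $$\mathrm{v}(G)\leq \min\left\{\gamma_{e}(G),\left\lfloor\frac{n-1}{2}\right\rfloor\right\}.$$ Hence $\mathrm{v}(G)\leq \min\{m(G),\lfloor\frac{n-1}{2}\rfloor\}$.
   Context: For a simple graph $G$, $\mathrm{v}(G)$ denotes the v-number of the edge ideal $I(G)$; combinatorially, $\mathrm{v}(G)=\min\{|A| : A\subseteq V(G) \text{ is an independent set and } N_G(A) \text{ is a vertex cover of } G\}$, where $N_G(A)$ is the set of vertices adjacent to some vertex of $A$. (Equivalently, $\mathrm{v}(I)=\min\{\deg f : f \text{ homogeneous}, (I:f) \text{ prime}\}$.) A matching is a set of pairwise disjoint edges; $m(G)$ is the maximum size of a matching, and the edge domination number $\gamma_e(G)$ is the minimum size of a maximal (with respect to inclusion) matching of $G$. *)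

theory Defs
  imports Main
begin

definition simple_graph :: "'a set \<Rightarrow> 'a set set \<Rightarrow> bool" where
  "simple_graph V E \<longleftrightarrow> finite V \<and> (\<forall>e\<in>E. e \<subseteq> V \<and> card e = 2)"

definition adj :: "'a set set \<Rightarrow> 'a \<Rightarrow> 'a \<Rightarrow> bool" where
  "adj E u v \<longleftrightarrow> {u, v} \<in> E"

definition connected_graph :: "'a set \<Rightarrow> 'a set set \<Rightarrow> bool" where
  "connected_graph V E \<longleftrightarrow>
     (\<forall>u\<in>V. \<forall>v\<in>V. (adj E)\<^sup>*\<^sup>* u v)"

definition independent_set :: "'a set \<Rightarrow> 'a set set \<Rightarrow> 'a set \<Rightarrow> bool" where
  "independent_set V E A \<longleftrightarrow> A \<subseteq> V \<and> (\<forall>e\<in>E. \<not> e \<subseteq> A)"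

definition neighbourhood :: "'a set \<Rightarrow> 'a set set \<Rightarrow> 'a set \<Rightarrow> 'a set" where
  "neighbourhood V E A = {v \<in> V. \<exists>a\<in>A. adj E a v}"

definition vertex_cover :: "'a set \<Rightarrow> 'a set set \<Rightarrow> 'a set \<Rightarrow> bool" where
  "vertex_cover V E C \<longleftrightarrow> C \<subseteq> V \<and> (\<forall>e\<in>E. e \<inter> C \<noteq> {})"

text \<open>Combinatorial v-number of the edge ideal.\<close>
definition v_number :: "'a set \<Rightarrow> 'a set set \<Rightarrow> nat" where
  "v_number V E = Min {card A | A. independent_set V E A \<and> vertex_cover V E (neighbourhood V E A)}"

definition matching :: "'a set set \<Rightarrow> 'a set set \<Rightarrow> bool" where
  "matching E M \<longleftrightarrow> M \<subseteq> E \<and> (\<forall>e\<in>M. \<forall>f\<in>M. e \<noteq> f \<longrightarrow> e \<inter> f = {})"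

definition maximal_matching :: "'a set set \<Rightarrow> 'a set set \<Rightarrow> bool" where
  "maximal_matching E M \<longleftrightarrow> matching E M \<and> (\<forall>M'. matching E M' \<and> M \<subseteq> M' \<longrightarrow> M' = M)"

definition matching_number :: "'a set set \<Rightarrow> nat" where
  "matching_number E = Max {card M | M. matching E M}"

definition edge_domination_number :: "'a set set \<Rightarrow> nat" where
  "edge_domination_number E = Min {card M | M. maximal_matching E M}"

end

theory Submission
  imports Defs
begin

text \<open>
  If an independent set \<open>A\<close> meets every edge in its closed neighbourhood \<open>N[A] = A \<union> N(A)\<close>,
  then \<open>N(A)\<close> is a vertex cover, so \<open>v(G) \<le> |A|\<close>. Such sets are built greedily: as long as
  some edge \<open>{u, w}\<close> misses \<open>N[A]\<close>, add \<open>u\<close> to \<open>A\<close>. Starting from the empty set and running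
  only over the edges of a maximal matching gives \<open>v(G) \<le> \<gamma>\<^sub>e(G) \<le> m(G)\<close>. Starting instead
  from a vertex of degree at least two (which exists since \<open>G\<close> is connected with at least
  three vertices) the quantity \<open>|N[A]| - 2|A| \<ge> 1\<close> never decreases, whence
  \<open>2 v(G) + 1 \<le> n\<close>.
\<close>

definition closed_neighbourhood :: "'a set \<Rightarrow> 'a set set \<Rightarrow> 'a set \<Rightarrow> 'a set" where
  "closed_neighbourhood V E A = A \<union> neighbourhood V E A"

lemma simple_graph_finite:
  assumes "simple_graph V E"
  shows "finite V" "finite E"
proof -
  show "finite V" using assms unfolding simple_graph_def by simp
  moreover have "E \<subseteq> Pow V" using assms unfolding simple_graph_def by auto
  ultimately show "finite E" by (metis finite_Pow_iff finite_subset)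
qed

lemma simple_graph_edgeE:
  assumes "simple_graph V E" "e \<in> E"
  obtains x y where "e = {x, y}" "x \<noteq> y" "x \<in> V" "y \<in> V"
proof -
  have "e \<subseteq> V" "card e = 2" using assms unfolding simple_graph_def by auto
  then obtain x y where "e = {x, y}" "x \<noteq> y" by (auto simp: card_2_iff)
  with \<open>e \<subseteq> V\<close> show thesis using that by simp
qed

lemma adj_commute: "adj E x y = adj E y x"
  unfolding adj_def by (simp add: insert_commute)

lemma adj_simple_graphD:
  assumes "simple_graph V E" "adj E u w"
  shows "u \<noteq> w" "u \<in> V" "w \<in> V"
  using simple_graph_edgeE[OF assms(1) assms(2)[unfolded adj_def]] by (metis doubleton_eq_iff)+

lemma closed_neighbourhood_subset:
  "independent_set V E A \<Longrightarrow> closed_neighbourhood V E A \<subseteq> V"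
  unfolding closed_neighbourhood_def independent_set_def neighbourhood_def by blast

lemma closed_neighbourhood_mono:
  "A \<subseteq> B \<Longrightarrow> closed_neighbourhood V E A \<subseteq> closed_neighbourhood V E B"
  unfolding closed_neighbourhood_def neighbourhood_def by auto

lemma independent_set_finite:
  "simple_graph V E \<Longrightarrow> independent_set V E A \<Longrightarrow> finite A"
  unfolding independent_set_def by (metis simple_graph_finite(1) finite_subset)

lemma independent_set_singleton:
  assumes "simple_graph V E" "x \<in> V"
  shows "independent_set V E {x}"
  unfolding independent_set_def
proof (intro conjI ballI)
  fix e assume "e \<in> E"
  with assms(1) obtain p q where "e = {p, q}" "p \<noteq> q" by (rule simple_graph_edgeE)
  then show "\<not> e \<subseteq> {x}" by auto
qed (use assms in simp)

lemma independent_set_insert_edge: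
  assumes g: "simple_graph V E" and A: "independent_set V E A"
    and uw: "{u, w} \<in> E" and u: "u \<notin> closed_neighbourhood V E A"
  shows "independent_set V E (insert u A)"
    and "closed_neighbourhood V E A \<union> {u, w} \<subseteq> closed_neighbourhood V E (insert u A)"
proof -
  obtain x y where "{u, w} = {x, y}" "x \<in> V" "y \<in> V" using simple_graph_edgeE[OF g uw] .
  then have uV: "u \<in> V" and wV: "w \<in> V" by auto
  show "independent_set V E (insert u A)"
    unfolding independent_set_def
  proof (intro conjI ballI)
    show "insert u A \<subseteq> V" using A uV unfolding independent_set_def by simp
  next
    fix e assume e: "e \<in> E"
    show "\<not> e \<subseteq> insert u A"
    proof
      assume sub: "e \<subseteq> insert u A"
      obtain p q where pq: "e = {p, q}" "p \<noteq> q" using simple_graph_edgeE[OF g e] by metis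
      have "\<not> e \<subseteq> A" using A e unfolding independent_set_def by simp
      with sub pq obtain a where "a \<in> A" "e = {a, u}" by auto
      then have "u \<in> neighbourhood V E A"
        using e uV unfolding neighbourhood_def adj_def by blast
      then show False using u unfolding closed_neighbourhood_def by simp
    qed
  qed
  have "w \<in> neighbourhood V E (insert u A)"
    using uw wV unfolding neighbourhood_def adj_def by blast
  then show "closed_neighbourhood V E A \<union> {u, w} \<subseteq> closed_neighbourhood V E (insert u A)"
    using closed_neighbourhood_mono[of A "insert u A" V E]
    unfolding closed_neighbourhood_def by auto
qed

lemma exists_independent_set_covering_edges:
  assumes g: "simple_graph V E" and "finite F" "F \<subseteq> E"
  shows "\<exists>A. independent_set V E A \<and> card A \<le> card F \<and> \<Union>F \<subseteq> closed_neighbourhood V E A"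
  using assms(2,3)
proof (induction F rule: finite_induct)
  case empty
  have "independent_set V E {}"
    using g unfolding independent_set_def simple_graph_def by fastforce
  then show ?case by auto
next
  case (insert e F)
  then obtain A where A: "independent_set V E A" "card A \<le> card F"
    "\<Union>F \<subseteq> closed_neighbourhood V E A" by auto
  have e: "e \<in> E" using insert.prems by simp
  show ?case
  proof (cases "e \<subseteq> closed_neighbourhood V E A")
    case True
    with A insert.hyps show ?thesis by (intro exI[of _ A]) auto
  next
    case False
    obtain x y where xy: "e = {x, y}" using simple_graph_edgeE[OF g e] by metis
    with False have "x \<notin> closed_neighbourhood V E A \<or> y \<notin> closed_neighbourhood V E A" by simp
    then obtain u w where uw: "e = {u, w}" "u \<notin> closed_neighbourhood V E A"
      using xy by (metis insert_commute)
    have "{u, w} \<in> E" using e uw(1) by simp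
    note step = independent_set_insert_edge[OF g A(1) this uw(2)]
    have "card (insert u A) \<le> card (insert e F)"
      using A(2) insert.hyps independent_set_finite[OF g A(1)] by (simp add: card_insert_if)
    moreover have "\<Union>(insert e F) \<subseteq> closed_neighbourhood V E (insert u A)"
      using A(3) step(2) uw(1) by auto
    ultimately show ?thesis using step(1) by blast
  qed
qed

lemma exists_independent_set_dominating_edges:
  assumes g: "simple_graph V E" and A: "independent_set V E A"
  shows "\<exists>B. independent_set V E B \<and> (\<forall>e\<in>E. e \<inter> closed_neighbourhood V E B \<noteq> {}) \<and>
    card (closed_neighbourhood V E A) + 2 * card B \<le> card (closed_neighbourhood V E B) + 2 * card A"
  using A
proof (induction "card (V - closed_neighbourhood V E A)" arbitrary: A rule: less_induct)
  case less
  let ?N = "closed_neighbourhood V E"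
  show ?case
  proof (cases "\<forall>e\<in>E. e \<inter> ?N A \<noteq> {}")
    case True
    with less.prems show ?thesis by blast
  next
    case False
    then obtain e where e: "e \<in> E" "e \<inter> ?N A = {}" by blast
    then obtain u w where uw: "e = {u, w}" "u \<noteq> w"
      using simple_graph_edgeE[OF g] by metis
    have u: "u \<notin> ?N A" using e uw by auto
    have "{u, w} \<in> E" using e uw by simp
    note step = independent_set_insert_edge[OF g less.prems this u]
    have fin: "finite V" using simple_graph_finite[OF g] by simp
    have "V - ?N (insert u A) \<subset> V - ?N A"
      using step(2) e uw closed_neighbourhood_subset[OF less.prems]
        closed_neighbourhood_subset[OF step(1)] by auto
    then have "card (V - ?N (insert u A)) < card (V - ?N A)"
      using fin by (simp add: psubset_card_mono)
    then obtain B where B: "independent_set V E B" "\<forall>e\<in>E. e \<inter> ?N B \<noteq> {}"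
      "card (?N (insert u A)) + 2 * card B \<le> card (?N B) + 2 * card (insert u A)"
      using less.hyps step(1) by blast
    have "card (?N A) + 2 = card (?N A \<union> {u, w})"
      using e uw finite_subset[OF closed_neighbourhood_subset[OF less.prems] fin]
      by (simp add: card_Un_disjoint Int_commute)
    also have "\<dots> \<le> card (?N (insert u A))"
      using step(2) closed_neighbourhood_subset[OF step(1)] fin
      by (meson card_mono finite_subset)
    finally have "card (?N A) + 2 \<le> card (?N (insert u A))" .
    moreover have "card (insert u A) = card A + 1"
      using u independent_set_finite[OF g less.prems]
      unfolding closed_neighbourhood_def by simp
    ultimately show ?thesis using B by (intro exI[of _ B]) auto
  qed
qed

lemma vertex_cover_neighbourhood:
  assumes g: "simple_graph V E" and A: "independent_set V E A"
    and dom: "\<forall>e\<in>E. e \<inter> closed_neighbourhood V E A \<noteq> {}"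
  shows "vertex_cover V E (neighbourhood V E A)"
  unfolding vertex_cover_def
proof (intro conjI ballI)
  show "neighbourhood V E A \<subseteq> V" unfolding neighbourhood_def by auto
next
  fix e assume e: "e \<in> E"
  then obtain x y where xy: "e = {x, y}" "x \<in> V" "y \<in> V" using simple_graph_edgeE[OF g] by metis
  have "adj E x y" "adj E y x" using e xy(1) unfolding adj_def by (auto simp: insert_commute)
  moreover obtain z where "z \<in> e" "z \<in> A \<union> neighbourhood V E A"
    using dom e unfolding closed_neighbourhood_def by blast
  ultimately show "e \<inter> neighbourhood V E A \<noteq> {}"
    using xy unfolding neighbourhood_def by blast
qed

lemma v_number_le_card:
  assumes g: "simple_graph V E" and A: "independent_set V E A"
    and dom: "\<forall>e\<in>E. e \<inter> closed_neighbourhood V E A \<noteq> {}"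
  shows "v_number V E \<le> card A"
proof -
  have "{card A | A. independent_set V E A \<and> vertex_cover V E (neighbourhood V E A)} \<subseteq> card ` Pow V"
    unfolding independent_set_def by auto
  then have "finite {card A | A. independent_set V E A \<and> vertex_cover V E (neighbourhood V E A)}"
    by (rule finite_subset) (simp add: simple_graph_finite[OF g])
  then show ?thesis
    unfolding v_number_def using vertex_cover_neighbourhood[OF assms] A by (intro Min_le) auto
qed

lemma maximal_matching_dominates_edges:
  assumes g: "simple_graph V E" and M: "maximal_matching E M" and e: "e \<in> E"
  shows "e \<inter> \<Union>M \<noteq> {}"
proof
  assume disj: "e \<inter> \<Union>M = {}"
  have "e \<noteq> {}" using simple_graph_edgeE[OF g e] by blast
  with disj have "e \<notin> M" by auto
  moreover have "matching E (insert e M)"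
    using M e disj unfolding maximal_matching_def matching_def by auto
  ultimately show False using M unfolding maximal_matching_def by blast
qed

lemma v_number_le_card_maximal_matching:
  assumes g: "simple_graph V E" and M: "maximal_matching E M"
  shows "v_number V E \<le> card M"
proof -
  have ME: "M \<subseteq> E" using M unfolding maximal_matching_def matching_def by simp
  then have "finite M" using simple_graph_finite(2)[OF g] by (rule finite_subset)
  then obtain A where A: "independent_set V E A" "card A \<le> card M"
    "\<Union>M \<subseteq> closed_neighbourhood V E A"
    using exists_independent_set_covering_edges[OF g _ ME] by blast
  have "\<forall>e\<in>E. e \<inter> closed_neighbourhood V E A \<noteq> {}"
    using maximal_matching_dominates_edges[OF g M] A(3) by blast
  with v_number_le_card[OF g A(1)] A(2) show ?thesis by simp
qed

lemma finite_matching_cards: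
  assumes "finite E"
  shows "finite {card M | M. matching E M}"
proof -
  have "{card M | M. matching E M} \<subseteq> card ` Pow E" unfolding matching_def by auto
  then show ?thesis by (rule finite_subset) (simp add: assms)
qed

lemma matching_card_le_matching_number:
  "finite E \<Longrightarrow> matching E M \<Longrightarrow> card M \<le> matching_number E"
  unfolding matching_number_def using finite_matching_cards by (intro Max_ge) auto

lemma maximum_matching_exists:
  assumes "finite E"
  obtains M where "matching E M" "card M = matching_number E"
proof -
  have "matching E {}" unfolding matching_def by simp
  then have "matching_number E \<in> {card M | M. matching E M}"
    unfolding matching_number_def using finite_matching_cards[OF assms] by (intro Max_in) auto
  then show thesis using that by auto
qed

lemma maximum_matching_is_maximal:
  assumes fin: "finite E" and M: "matching E M" "card M = matching_number E"
  shows "maximal_matching E M"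
  unfolding maximal_matching_def
proof (intro conjI allI impI)
  fix M' assume M': "matching E M' \<and> M \<subseteq> M'"
  then have "finite M'" using fin unfolding matching_def by (auto intro: finite_subset)
  moreover have "card M' \<le> card M"
    using matching_card_le_matching_number[OF fin] M M' by simp
  ultimately show "M' = M" using M' by (metis card_seteq)
qed (rule M(1))

lemma finite_maximal_matching_cards:
  assumes "finite E"
  shows "finite {card M | M. maximal_matching E M}"
proof -
  have "{card M | M. maximal_matching E M} \<subseteq> {card M | M. matching E M}"
    unfolding maximal_matching_def by blast
  with finite_matching_cards[OF assms] show ?thesis by (rule finite_subset[rotated])
qed

lemma minimum_maximal_matching_exists:
  assumes "finite E"
  obtains M where "maximal_matching E M" "card M = edge_domination_number E"
proof -
  let ?S = "{card M | M. maximal_matching E M}"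
  obtain M0 where "matching E M0" "card M0 = matching_number E"
    using maximum_matching_exists[OF assms] .
  then have "?S \<noteq> {}" using maximum_matching_is_maximal[OF assms] by blast
  with finite_maximal_matching_cards[OF assms] have "edge_domination_number E \<in> ?S"
    unfolding edge_domination_number_def by (rule Min_in)
  then show thesis using that by auto
qed

lemma edge_domination_number_le_matching_number:
  assumes "finite E"
  shows "edge_domination_number E \<le> matching_number E"
proof -
  obtain M where M: "matching E M" "card M = matching_number E"
    using maximum_matching_exists[OF assms] .
  note finite_maximal_matching_cards[OF assms]
  moreover have "matching_number E \<in> {card M | M. maximal_matching E M}"
    using maximum_matching_is_maximal[OF assms M] M(2) by force
  ultimately show ?thesis
    unfolding edge_domination_number_def by (rule Min_le)
qed

lemma v_number_le_edge_domination_number: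
  assumes g: "simple_graph V E"
  shows "v_number V E \<le> edge_domination_number E"
proof -
  obtain M where "maximal_matching E M" "card M = edge_domination_number E"
    using minimum_maximal_matching_exists simple_graph_finite[OF g] by metis
  with v_number_le_card_maximal_matching[OF g] show ?thesis by metis
qed

lemma connected_graph_vertex_with_two_neighbours:
  assumes conn: "connected_graph V E" and n: "card V \<ge> 3"
  obtains x y z where "y \<noteq> z" "adj E x y" "adj E x z"
proof (rule ccontr)
  assume "\<not> thesis"
  with that have uniq: "\<And>x y z. adj E x y \<Longrightarrow> adj E x z \<Longrightarrow> y = z" by blast
  obtain T where "T \<subseteq> V" "card T = 3" using obtain_subset_with_card_n[OF n] by blast
  then obtain a b d where abd: "a \<in> V" "b \<in> V" "d \<in> V" "a \<noteq> b" "b \<noteq> d" "a \<noteq> d"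
    by (auto simp: card_3_iff)
  \<comment> \<open>with all degrees at most one, every walk from \<open>a\<close> stays within \<open>a\<close> and its neighbour\<close>
  have walk: "(adj E)\<^sup>*\<^sup>* a z \<Longrightarrow> z = a \<or> adj E a z" for z
  proof (induction rule: rtranclp_induct)
    case (step y z)
    then show ?case using uniq[of y a z] adj_commute[of E a y] by blast
  qed simp
  have "(adj E)\<^sup>*\<^sup>* a b" "(adj E)\<^sup>*\<^sup>* a d"
    using conn abd unfolding connected_graph_def by auto
  then have "adj E a b" "adj E a d" using walk abd by auto
  then show False using uniq abd(5) by blast
qed

lemma v_number_le_half_order:
  assumes g: "simple_graph V E" and conn: "connected_graph V E" and n: "card V \<ge> 3"
  shows "v_number V E \<le> (card V - 1) div 2"
proof -
  let ?N = "closed_neighbourhood V E"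
  obtain x y z where xyz: "y \<noteq> z" "adj E x y" "adj E x z"
    using connected_graph_vertex_with_two_neighbours[OF conn n] .
  note xyzV = adj_simple_graphD[OF g xyz(2)] adj_simple_graphD[OF g xyz(3)]
  have x: "independent_set V E {x}" using independent_set_singleton[OF g] xyzV by blast
  have "{x, y, z} \<subseteq> ?N {x}"
    using xyz xyzV unfolding closed_neighbourhood_def neighbourhood_def by auto
  moreover have "card {x, y, z} = 3" using xyz xyzV by auto
  ultimately have "3 \<le> card (?N {x})"
    using closed_neighbourhood_subset[OF x] simple_graph_finite[OF g]
    by (metis card_mono finite_subset)
  moreover obtain B where B: "independent_set V E B" "\<forall>e\<in>E. e \<inter> ?N B \<noteq> {}"
    "card (?N {x}) + 2 * card B \<le> card (?N B) + 2 * card {x}"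
    using exists_independent_set_dominating_edges[OF g x] by blast
  moreover have "card (?N B) \<le> card V"
    using closed_neighbourhood_subset[OF B(1)] simple_graph_finite(1)[OF g] by (rule card_mono[rotated])
  ultimately have "card B \<le> (card V - 1) div 2" by simp
  with v_number_le_card[OF g B(1,2)] show ?thesis by simp
qed

theorem proposition3p2:
  fixes V :: "'a set" and E :: "'a set set"
  assumes "simple_graph V E" and "connected_graph V E" and "card V \<ge> 3"
  shows "v_number V E \<le> min (edge_domination_number E) ((card V - 1) div 2)
         \<and> v_number V E \<le> min (matching_number E) ((card V - 1) div 2)"
  using v_number_le_edge_domination_number[OF assms(1)]
    edge_domination_number_le_matching_number[OF simple_graph_finite(2)[OF assms(1)]]
    v_number_le_half_order[OF assms]
  by simp

end
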